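(* Let $d\ge3$, $0\le k\le d$, $P$ the ultrahyperbolic operator of index $k$ on $L^2(\mathbb{R}^d)$, and $0\le s<1$. Then \[\sup_{z\in\mathbb{C}\setminus\sigma(P)}\|\langle x\rangle^{-s}(P-z)^{-1}\langle x\rangle^{-s}\|_{B(L^2(\mathbb{R}^d))}=\infty.\]
   Context: $D_x=(2\pi i)^{-1}\nabla_x$; $P=\sum_{j=1}^kD_{x_j}^2-\sum_{j=k+1}^dD_{x_j}^2$, the Fourier multiplier by $\xi_1^2+\dots+\xi_k^2-\xi_{k+1}^2-\dots-\xi_d^2$, self-adjoint on $L^2(\mathbb{R}^d)$, with spectrum $\sigma(P)$. $\langle x\rangle=(1+|x|^2)^{1/2}$. *)

theory Defs
  imports "HOL-Analysis.Analysis"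
begin

definition japan :: "real^'n \<Rightarrow> real" where
  "japan x = sqrt (1 + (norm x)^2)"

text \<open>Symbol of the ultrahyperbolic operator; K is the set of the k coordinates with sign +.\<close>
definition uh_symbol :: "'n::finite set \<Rightarrow> real^'n \<Rightarrow> real" where
  "uh_symbol K \<xi> = (\<Sum>j\<in>K. (\<xi>$j)^2) - (\<Sum>j\<in>-K. (\<xi>$j)^2)"

text \<open>Spectrum of the Fourier multiplier P (closure of the range of its continuous symbol).\<close>
definition spec_P :: "'n::finite set \<Rightarrow> complex set" where
  "spec_P K = closure (complex_of_real ` range (uh_symbol K))"

text \<open>Fourier transform with the convention D = (2 pi i)^(-1) nabla.\<close>
definition fourier :: "(real^'n \<Rightarrow> complex) \<Rightarrow> real^'n \<Rightarrow> complex" where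
  "fourier f \<xi> = integral\<^sup>L lborel (\<lambda>x. f x * cis (- 2 * pi * (x \<bullet> \<xi>)))"

definition l2norm :: "(real^'n \<Rightarrow> complex) \<Rightarrow> real" where
  "l2norm f = sqrt (integral\<^sup>L lborel (\<lambda>x. (cmod (f x))^2))"

text \<open>Continuous compactly supported functions (a dense subspace of L^2).\<close>
definition Cc :: "(real^'n \<Rightarrow> complex) set" where
  "Cc = {f. continuous_on UNIV f \<and> bounded {x. f x \<noteq> 0}}"

text \<open>The sesquilinear form of <x>^(-s) (P-z)^(-1) <x>^(-s), computed via Plancherel:
  < <x>^(-s) (P-z)^(-1) <x>^(-s) f, g > .\<close>
definition wres_form ::
  "'n::finite set \<Rightarrow> real \<Rightarrow> complex \<Rightarrow> (real^'n \<Rightarrow> complex) \<Rightarrow> (real^'n \<Rightarrow> complex) \<Rightarrow> complex" where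
  "wres_form K s z f g =
     integral\<^sup>L lborel (\<lambda>\<xi>.
        fourier (\<lambda>x. complex_of_real (japan x powr (-s)) * f x) \<xi>
      * cnj (fourier (\<lambda>x. complex_of_real (japan x powr (-s)) * g x) \<xi>)
      / (complex_of_real (uh_symbol K \<xi>) - z))"

text \<open>Operator norm on B(L^2) (possibly infinite), as the supremum of the form over a dense subspace.\<close>
definition wres_norm :: "'n::finite set \<Rightarrow> real \<Rightarrow> complex \<Rightarrow> ereal" where
  "wres_norm K s z =
     (SUP fg \<in> {(f, g). f \<in> Cc \<and> g \<in> Cc \<and> l2norm f > 0 \<and> l2norm g > 0}.
        ereal (cmod (wres_form K s z (fst fg) (snd fg)) / (l2norm (fst fg) * l2norm (snd fg))))"

end

(*
  Test the form on f_R = <x>^s h_R, where h_R(x) = prod_j max(0, 1 - |x_j|/R) is a tensor product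
  of tent functions, at the spectral parameter z = i eps with eps = R^-2. The weights cancel, the
  Fourier transform of h_R is a tensor product Psi_R of Fejer kernels, and the imaginary part of
  the form is the integral of Psi_R^2 eps / (p^2 + eps^2), p the symbol of P. On the cube
  |xi_j| <= 1/(4R) one has Psi_R >= (R/2)^d and |p(xi)| <= |xi|^2 <= d eps, so the form is at
  least of order R^(d+2), while ||f_R||^2 is at most of order R^(d+2s). The normalised form thus
  grows like R^(2-2s), which is unbounded since s < 1.
*)
theory Submission
  imports Defs "HOL-Probability.Sinc_Integral"
begin

section \<open>Tent functions and the Fejer kernel\<close>

definition tent :: "real \<Rightarrow> real \<Rightarrow> real" where
  "tent R t = max 0 (1 - \<bar>t\<bar> / R)"

text \<open>The Fourier transform of \<^term>\<open>tent R\<close> in the normalisation of \<^const>\<open>fourier\<close>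
  (the Fejer kernel).\<close>
definition fejer :: "real \<Rightarrow> real \<Rightarrow> real" where
  "fejer R a = (if a = 0 then R else (1 - cos (2 * pi * a * R)) / (2 * pi\<^sup>2 * a\<^sup>2 * R))"

lemma tent_nonneg: "0 \<le> tent R t"
  by (simp add: tent_def)

lemma tent_le_1: "R > 0 \<Longrightarrow> tent R t \<le> 1"
  by (simp add: tent_def)

lemma tent_ge_half: "R > 0 \<Longrightarrow> \<bar>t\<bar> \<le> R / 2 \<Longrightarrow> 1 / 2 \<le> tent R t"
  by (simp add: tent_def field_simps)

lemma tent_eq_0: "R > 0 \<Longrightarrow> R \<le> \<bar>t\<bar> \<Longrightarrow> tent R t = 0"
  by (simp add: tent_def)

lemma tent_right: "R > 0 \<Longrightarrow> 0 \<le> t \<Longrightarrow> t \<le> R \<Longrightarrow> tent R t = 1 - t / R"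
  by (simp add: tent_def)

lemma tent_left: "R > 0 \<Longrightarrow> - R \<le> t \<Longrightarrow> t \<le> 0 \<Longrightarrow> tent R t = 1 + t / R"
  by (simp add: tent_def field_simps)

lemma continuous_on_tent: "continuous_on A (tent R)"
  unfolding tent_def divide_inverse by (intro continuous_intros)

lemma has_integral_affine:
  fixes \<alpha> \<beta> :: real
  assumes "a \<le> b"
  shows "((\<lambda>t. complex_of_real (\<alpha> + \<beta> * t)) has_integral
           of_real ((\<alpha> * b + \<beta> * b\<^sup>2 / 2) - (\<alpha> * a + \<beta> * a\<^sup>2 / 2))) {a..b}"
proof -
  have "((\<lambda>t. \<alpha> * t + \<beta> * t\<^sup>2 / 2) has_real_derivative \<alpha> + \<beta> * t) (at t within {a..b})" for t
    by (auto intro!: derivative_eq_intros)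
  from fundamental_theorem_of_calculus[OF assms has_vector_derivative_of_real[OF this]]
  show ?thesis unfolding of_real_diff .
qed

lemma has_integral_affine_mult_exp:
  fixes \<alpha> \<beta> \<kappa> :: complex
  assumes "\<kappa> \<noteq> 0" and "a \<le> b"
  defines "F \<equiv> \<lambda>t::real. ((\<alpha> + \<beta> * of_real t) / \<kappa> - \<beta> / \<kappa>\<^sup>2) * exp (\<kappa> * of_real t)"
  shows "((\<lambda>t. (\<alpha> + \<beta> * of_real t) * exp (\<kappa> * of_real t)) has_integral F b - F a) {a..b}"
proof (rule fundamental_theorem_of_calculus[OF \<open>a \<le> b\<close>])
  fix t :: real
  have "((\<lambda>w. ((\<alpha> + \<beta> * w) / \<kappa> - \<beta> / \<kappa>\<^sup>2) * exp (\<kappa> * w)) has_field_derivative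
          (\<alpha> + \<beta> * t) * exp (\<kappa> * t)) (at (of_real t))"
    using \<open>\<kappa> \<noteq> 0\<close> by (auto intro!: derivative_eq_intros simp: field_simps power2_eq_square)
  then show "(F has_vector_derivative (\<alpha> + \<beta> * t) * exp (\<kappa> * t)) (at t within {a..b})"
    unfolding F_def by (rule has_vector_derivative_real_field)
qed

lemma has_integral_tent:
  assumes R: "R > 0"
  shows "((\<lambda>t. complex_of_real (tent R t)) has_integral of_real R) {-R..R}"
proof -
  have right: "((\<lambda>t. complex_of_real (tent R t)) has_integral of_real (R / 2)) {0..R}"
  proof (rule has_integral_eq_rhs[OF has_integral_eq[OF _ has_integral_affine[of 0 R 1 "- 1 / R"]]])
    show "of_real (1 + - 1 / R * t) = of_real (tent R t)" if "t \<in> {0..R}" for t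
      using that R by (simp add: tent_right)
  qed (use R in \<open>simp_all add: power2_eq_square\<close>)
  have left: "((\<lambda>t. complex_of_real (tent R t)) has_integral of_real (R / 2)) {-R..0}"
  proof (rule has_integral_eq_rhs[OF has_integral_eq[OF _ has_integral_affine[of "-R" 0 1 "1 / R"]]])
    show "of_real (1 + 1 / R * t) = of_real (tent R t)" if "t \<in> {-R..0}" for t
      using that R by (simp add: tent_left)
  qed (use R in \<open>simp_all add: power2_eq_square\<close>)
  have "((\<lambda>t. complex_of_real (tent R t)) has_integral of_real (R / 2) + of_real (R / 2)) {-R..R}"
    by (rule has_integral_combine[OF _ _ left right]) (use R in auto)
  then show ?thesis
    by simp
qed

lemma has_integral_tent_mult_exp:
  fixes \<kappa> :: complex
  assumes R: "R > 0" and \<kappa>: "\<kappa> \<noteq> 0"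
  shows "((\<lambda>t. tent R t * exp (\<kappa> * t)) has_integral
           (exp (\<kappa> * R) + exp (- \<kappa> * R) - 2) / (R * \<kappa>\<^sup>2)) {-R..R}"
proof -
  have right: "((\<lambda>t. tent R t * exp (\<kappa> * t)) has_integral
           exp (\<kappa> * R) / (R * \<kappa>\<^sup>2) - (1 / \<kappa> + 1 / (R * \<kappa>\<^sup>2))) {0..R}"
  proof (rule has_integral_eq_rhs[OF has_integral_eq[OF _ has_integral_affine_mult_exp[of \<kappa> 0 R 1 "- 1 / R"]]])
    show "(1 + of_real (- 1 / R) * t) * exp (\<kappa> * t) = of_real (tent R t) * exp (\<kappa> * t)"
      if "t \<in> {0..R}" for t
      using that R by (simp add: tent_right)
  qed (use R \<kappa> in \<open>simp_all add: divide_simps\<close>)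
  have left: "((\<lambda>t. tent R t * exp (\<kappa> * t)) has_integral
           (1 / \<kappa> - 1 / (R * \<kappa>\<^sup>2)) + exp (- \<kappa> * R) / (R * \<kappa>\<^sup>2)) {-R..0}"
  proof (rule has_integral_eq_rhs[OF has_integral_eq[OF _ has_integral_affine_mult_exp[of \<kappa> "-R" 0 1 "1 / R"]]])
    show "(1 + of_real (1 / R) * t) * exp (\<kappa> * t) = of_real (tent R t) * exp (\<kappa> * t)"
      if "t \<in> {-R..0}" for t
      using that R by (simp add: tent_left)
  qed (use R \<kappa> in \<open>simp_all add: divide_simps\<close>)
  have "((\<lambda>t. tent R t * exp (\<kappa> * t)) has_integral
      (1 / \<kappa> - 1 / (R * \<kappa>\<^sup>2)) + exp (- \<kappa> * R) / (R * \<kappa>\<^sup>2)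
      + (exp (\<kappa> * R) / (R * \<kappa>\<^sup>2) - (1 / \<kappa> + 1 / (R * \<kappa>\<^sup>2)))) {-R..R}"
    by (rule has_integral_combine[OF _ _ left right]) (use R in auto)
  moreover have "(1 / \<kappa> - 1 / (R * \<kappa>\<^sup>2)) + exp (- \<kappa> * R) / (R * \<kappa>\<^sup>2)
      + (exp (\<kappa> * R) / (R * \<kappa>\<^sup>2) - (1 / \<kappa> + 1 / (R * \<kappa>\<^sup>2)))
      = (exp (\<kappa> * R) + exp (- \<kappa> * R) - 2) / (R * \<kappa>\<^sup>2)"
    by (simp add: diff_divide_distrib add_divide_distrib)
  ultimately show ?thesis
    by simp
qed

lemma has_integral_tent_fourier:
  assumes R: "R > 0"
  shows "((\<lambda>t. tent R t * cis (- 2 * pi * (t * a))) has_integral fejer R a) UNIV"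
proof -
  have "((\<lambda>t. tent R t * cis (- 2 * pi * (t * a))) has_integral fejer R a) {-R..R}"
  proof (cases "a = 0")
    case True
    then show ?thesis
      using has_integral_tent[OF R] by (simp add: fejer_def)
  next
    case False
    define \<kappa> where "\<kappa> = - of_real (2 * pi * a) * \<i>"
    define c where "c = cos (2 * pi * a * R)"
    have "\<kappa> \<noteq> 0"
      using False by (simp add: \<kappa>_def)
    have cis_eq: "cis (- 2 * pi * (t * a)) = exp (\<kappa> * t)" for t
      by (simp add: cis_conv_exp \<kappa>_def algebra_simps)
    have "\<kappa> * R = - (\<i> * of_real (2 * pi * a * R))"
      by (simp add: \<kappa>_def)
    then have "exp (\<kappa> * R) + exp (- \<kappa> * R) = 2 * cos (of_real (2 * pi * a * R))"
      by (simp only: cos_exp_eq mult_minus_left minus_minus add.commute) simp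
    then have exp_sum: "exp (\<kappa> * R) + exp (- \<kappa> * R) = 2 * of_real c"
      by (simp only: c_def cos_of_real)
    have \<kappa>_sq: "\<kappa>\<^sup>2 = - of_real (4 * pi\<^sup>2 * a\<^sup>2)"
      by (simp add: \<kappa>_def power_mult_distrib)
    have fejer_eq: "(2 * c - 2) / (R * - (4 * pi\<^sup>2 * a\<^sup>2)) = fejer R a"
      using False R by (simp add: fejer_def c_def field_simps)
    have "(exp (\<kappa> * R) + exp (- \<kappa> * R) - 2) / (R * \<kappa>\<^sup>2) = (2 * of_real c - 2) / (R * \<kappa>\<^sup>2)"
      by (simp only: exp_sum)
    also have "\<dots> = of_real ((2 * c - 2) / (R * - (4 * pi\<^sup>2 * a\<^sup>2)))"
      unfolding \<kappa>_sq by simp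
    also have "\<dots> = of_real (fejer R a)"
      by (simp only: fejer_eq)
    finally show ?thesis
      using has_integral_tent_mult_exp[OF R \<open>\<kappa> \<noteq> 0\<close>] unfolding cis_eq by simp
  qed
  then show ?thesis
    by (rule has_integral_on_superset) (use R in \<open>auto simp: tent_eq_0\<close>)
qed

lemma integrable_tent_fourier:
  assumes R: "R > 0"
  shows "integrable lborel (\<lambda>t. tent R t * cis (- 2 * pi * (t * a)))"
proof -
  have "tent R t = 0" if "t \<notin> {-R..R}" for t
    using that R by (intro tent_eq_0) auto
  then have supp: "(\<lambda>t. indicator {-R..R} t *\<^sub>R (tent R t * cis (- 2 * pi * (t * a))))
      = (\<lambda>t. tent R t * cis (- 2 * pi * (t * a)))"
    by (auto simp: fun_eq_iff split: split_indicator)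
  have "integrable lborel (\<lambda>t. indicator {-R..R} t *\<^sub>R (tent R t * cis (- 2 * pi * (t * a))))"
    by (intro borel_integrable_compact continuous_intros continuous_on_of_real continuous_on_tent) auto
  then show ?thesis
    by (simp only: supp)
qed

lemma integral_tent_fourier:
  "R > 0 \<Longrightarrow> integral\<^sup>L lborel (\<lambda>t. tent R t * cis (- 2 * pi * (t * a))) = fejer R a"
  by (rule has_integral_unique[OF has_integral_integral_lborel[OF integrable_tent_fourier]
        has_integral_tent_fourier])

lemma one_minus_cos_le: "1 - cos x \<le> (x::real)\<^sup>2 / 2"
proof -
  have "\<bar>sin (x / 2)\<bar>\<^sup>2 \<le> \<bar>x / 2\<bar>\<^sup>2"
    by (intro power_mono abs_sin_x_le_abs_x abs_ge_zero)
  then show ?thesis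
    using cos_double_sin[of "x / 2"] by (simp add: power_divide)
qed

lemma one_minus_cos_ge:
  fixes x :: real
  assumes "\<bar>x\<bar> \<le> 2"
  shows "x\<^sup>2 / 4 \<le> 1 - cos x"
proof -
  define y where "y = x / 2"
  have y: "\<bar>y\<bar> \<le> 1"
    using assms by (simp add: y_def)
  have "\<bar>sin y - y\<bar> \<le> \<bar>y\<bar> ^ 3 / 6"
    using Maclaurin_sin_bound[of y 3] by (simp add: sin_coeff_def eval_nat_numeral)
  also have "\<dots> \<le> \<bar>y\<bar> / 6"
    using y power_le_one[of "\<bar>y\<bar>" 2] mult_left_le[of "\<bar>y\<bar>\<^sup>2" "\<bar>y\<bar>"]
    by (simp add: power3_eq_cube power2_eq_square mult.assoc)
  finally have "5 / 6 * \<bar>y\<bar> \<le> \<bar>sin y\<bar>"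
    by linarith
  then have "(5 / 6 * \<bar>y\<bar>)\<^sup>2 \<le> \<bar>sin y\<bar>\<^sup>2"
    by (intro power_mono) auto
  then have "(5 / 6 * \<bar>y\<bar>)\<^sup>2 \<le> (sin y)\<^sup>2"
    by (simp only: power2_abs)
  moreover have "(5 / 6 * \<bar>y\<bar>)\<^sup>2 = 25 / 36 * y\<^sup>2"
    by (simp add: power2_eq_square)
  ultimately have "y\<^sup>2 / 2 \<le> (sin y)\<^sup>2"
    using zero_le_power2[of y] by linarith
  then show ?thesis
    using cos_double_sin[of y] by (simp add: y_def power_divide)
qed

lemma fejer_nonneg: "R > 0 \<Longrightarrow> 0 \<le> fejer R a"
  by (simp add: fejer_def)

lemma fejer_le:
  assumes R: "R > 0"
  shows "fejer R a \<le> R"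
proof (cases "a = 0")
  case False
  have "1 - cos (2 * pi * a * R) \<le> (2 * pi * a * R)\<^sup>2 / 2"
    by (rule one_minus_cos_le)
  also have "\<dots> = R * (2 * pi\<^sup>2 * a\<^sup>2 * R)"
    by (simp add: power_mult_distrib power2_eq_square)
  finally show ?thesis
    using False R by (simp add: fejer_def divide_le_eq)
qed (simp add: fejer_def)

lemma fejer_le_inverse_square:
  assumes R: "R > 0" and a: "a \<noteq> 0"
  shows "fejer R a \<le> 1 / (R * a\<^sup>2)"
proof -
  have "1 - cos (2 * pi * a * R) \<le> 2"
    by simp
  also have "2 \<le> 2 * pi\<^sup>2"
    using one_le_power[of pi 2] pi_gt3 by simp
  finally have "(1 - cos (2 * pi * a * R)) / (2 * pi\<^sup>2 * a\<^sup>2 * R) \<le> 2 * pi\<^sup>2 / (2 * pi\<^sup>2 * a\<^sup>2 * R)"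
    using R by (intro divide_right_mono) auto
  then show ?thesis
    using a by (simp add: fejer_def mult.commute)
qed

lemma fejer_le_inverse_1_plus_square:
  assumes R: "R > 0"
  shows "fejer R a \<le> 2 * (R + 1 / R) / (1 + a\<^sup>2)"
proof (cases "a\<^sup>2 \<le> 1")
  case True
  have "R * (1 + a\<^sup>2) \<le> R * 2"
    using True R by (intro mult_left_mono) auto
  also have "\<dots> \<le> 2 * (R + 1 / R)"
    using R by simp
  finally have "R \<le> 2 * (R + 1 / R) / (1 + a\<^sup>2)"
    by (simp add: le_divide_eq add_pos_nonneg)
  with fejer_le[OF R] show ?thesis
    by (rule order_trans)
next
  case False
  then have "a \<noteq> 0"
    by auto
  have "1 / (R * a\<^sup>2) = (2 / R) / (2 * a\<^sup>2)"
    by simp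
  also have "\<dots> \<le> (2 / R) / (1 + a\<^sup>2)"
    using False R by (intro divide_left_mono) (auto intro!: mult_pos_pos add_pos_nonneg)
  also have "\<dots> \<le> 2 * (R + 1 / R) / (1 + a\<^sup>2)"
    using R by (intro divide_right_mono) (auto simp: add_pos_nonneg)
  finally show ?thesis
    using fejer_le_inverse_square[OF R \<open>a \<noteq> 0\<close>] by (rule order_trans[rotated])
qed

lemma fejer_ge:
  assumes R: "R > 0" and a: "\<bar>a\<bar> \<le> 1 / (4 * R)"
  shows "R / 2 \<le> fejer R a"
proof (cases "a = 0")
  case False
  have "\<bar>a\<bar> * R \<le> 1 / 4"
    using a R by (simp add: le_divide_eq mult_ac)
  then have "pi * (\<bar>a\<bar> * R) \<le> 4 * (1 / 4)"
    using pi_less_4 R by (intro mult_mono) auto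
  then have "(2 * pi * a * R)\<^sup>2 / 4 \<le> 1 - cos (2 * pi * a * R)"
    using R by (intro one_minus_cos_ge) (simp add: abs_mult)
  moreover have "(2 * pi * a * R)\<^sup>2 / 4 = R / 2 * (2 * pi\<^sup>2 * a\<^sup>2 * R)"
    by (simp add: power_mult_distrib power2_eq_square)
  ultimately show ?thesis
    using False R by (simp add: fejer_def le_divide_eq)
qed (use R in \<open>simp add: fejer_def\<close>)

lemma borel_measurable_fejer [measurable]: "fejer R \<in> borel_measurable borel"
  unfolding fejer_def by measurable

lemma integrable_fejer_square:
  assumes R: "R > 0"
  shows "integrable lborel (\<lambda>a. (fejer R a)\<^sup>2)"
proof (rule Bochner_Integration.integrable_bound)
  have "integrable lborel (\<lambda>a::real. inverse (1 + a\<^sup>2))"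
    using integrable_inverse_1_plus_square by (simp add: set_integrable_def einterval_def)
  then show "integrable lborel (\<lambda>a. R * (2 * (R + 1 / R)) * inverse (1 + a\<^sup>2))"
    by (rule integrable_mult_right)
  show "AE a in lborel. norm ((fejer R a)\<^sup>2) \<le> norm (R * (2 * (R + 1 / R)) * inverse (1 + a\<^sup>2))"
  proof (rule AE_I2)
    fix a
    have "(fejer R a)\<^sup>2 \<le> R * fejer R a"
      using fejer_nonneg[OF R] fejer_le[OF R] by (simp add: power2_eq_square mult_right_mono)
    also have "\<dots> \<le> R * (2 * (R + 1 / R) / (1 + a\<^sup>2))"
      using R fejer_le_inverse_1_plus_square[OF R] by (intro mult_left_mono) auto
    finally show "norm ((fejer R a)\<^sup>2) \<le> norm (R * (2 * (R + 1 / R)) * inverse (1 + a\<^sup>2))"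
      using R by (simp add: divide_inverse mult.assoc add_pos_nonneg)
  qed
qed simp

section \<open>Tensor products over the standard basis\<close>

lemma
  fixes f :: "'a::euclidean_space \<Rightarrow> real \<Rightarrow> 'b::{real_normed_field,banach,second_countable_topology}"
  assumes f: "\<And>b. b \<in> Basis \<Longrightarrow> integrable lborel (f b)"
  shows integrable_prod_Basis: "integrable lborel (\<lambda>x::'a. \<Prod>b\<in>Basis. f b (x \<bullet> b))"
    and integral_prod_Basis:
      "integral\<^sup>L lborel (\<lambda>x::'a. \<Prod>b\<in>Basis. f b (x \<bullet> b)) = (\<Prod>b\<in>Basis. integral\<^sup>L lborel (f b))"
proof -
  interpret product_sigma_finite "\<lambda>_::'a. lborel :: real measure"
    by standard
  have [measurable]: "b \<in> Basis \<Longrightarrow> f b \<in> borel_measurable borel" for b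
    using f by (simp add: borel_measurable_integrable)
  let ?g = "\<lambda>g. \<Sum>b\<in>Basis. g b *\<^sub>R b :: 'a"
  have g: "?g \<in> measurable (\<Pi>\<^sub>M b\<in>Basis. lborel) borel"
    by measurable
  have F: "(\<lambda>x::'a. \<Prod>b\<in>Basis. f b (x \<bullet> b)) \<in> borel_measurable borel"
    by measurable
  have coord: "(\<Prod>b\<in>Basis. f b (?g g \<bullet> b)) = (\<Prod>b\<in>Basis. f b (g b))" for g
    by (intro prod.cong refl) (simp add: inner_sum_left inner_Basis if_distrib cong: if_cong)
  show "integrable lborel (\<lambda>x::'a. \<Prod>b\<in>Basis. f b (x \<bullet> b))"
    by (subst lborel_eq) (simp add: integrable_distr_eq[OF g F] coord product_integrable_prod f)
  show "integral\<^sup>L lborel (\<lambda>x::'a. \<Prod>b\<in>Basis. f b (x \<bullet> b)) = (\<Prod>b\<in>Basis. integral\<^sup>L lborel (f b))"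
    by (subst lborel_eq) (simp add: integral_distr[OF g F] coord product_integral_prod f)
qed

definition cube :: "real \<Rightarrow> 'a::euclidean_space set" where
  "cube r = cbox (- r *\<^sub>R One) (r *\<^sub>R One)"

lemma mem_cube: "x \<in> cube r \<longleftrightarrow> (\<forall>b\<in>Basis. \<bar>x \<bullet> b\<bar> \<le> r)"
  by (auto simp: cube_def mem_box abs_le_iff)

lemma measure_cube:
  assumes "r \<ge> 0"
  shows "measure lborel (cube r :: 'a::euclidean_space set) = (2 * r) ^ DIM('a)"
proof -
  have "(\<Prod>b\<in>Basis. (r *\<^sub>R (One::'a) - - r *\<^sub>R One) \<bullet> b) = (\<Prod>b\<in>(Basis::'a set). 2 * r)"
    by (intro prod.cong) (simp_all add: inner_add_left)
  then show ?thesis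
    using assms by (simp add: cube_def)
qed

lemma norm_power2_le_of_mem_cube:
  fixes x :: "'a::euclidean_space" and r :: real
  assumes "x \<in> cube r"
  shows "(norm x)\<^sup>2 \<le> DIM('a) * r\<^sup>2"
proof -
  have "(norm x)\<^sup>2 = (\<Sum>b\<in>Basis. (x \<bullet> b)\<^sup>2)"
    unfolding power2_norm_eq_inner by (subst euclidean_inner) (simp add: power2_eq_square)
  also have "\<dots> \<le> (\<Sum>b\<in>(Basis::'a set). r\<^sup>2)"
    using assms by (intro sum_mono) (auto simp: mem_cube abs_le_square_iff[symmetric] intro: order_trans)
  finally show ?thesis
    by simp
qed

lemma cis_sum: "finite A \<Longrightarrow> cis (\<Sum>i\<in>A. f i) = (\<Prod>i\<in>A. cis (f i))"
  by (induction rule: finite_induct) (simp_all add: cis_mult[symmetric])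

definition tent_prod :: "real \<Rightarrow> 'a::euclidean_space \<Rightarrow> real" where
  "tent_prod R x = (\<Prod>b\<in>Basis. tent R (x \<bullet> b))"

definition fejer_prod :: "real \<Rightarrow> 'a::euclidean_space \<Rightarrow> real" where
  "fejer_prod R \<xi> = (\<Prod>b\<in>Basis. fejer R (\<xi> \<bullet> b))"

lemma tent_prod_nonneg: "0 \<le> tent_prod R x"
  by (simp add: tent_prod_def tent_nonneg prod_nonneg)

lemma tent_prod_le_1: "R > 0 \<Longrightarrow> tent_prod R x \<le> 1"
  by (simp add: tent_prod_def tent_nonneg tent_le_1 prod_le_1)

lemma tent_prod_eq_0:
  assumes "R > 0" and "x \<notin> cube R"
  shows "tent_prod R x = 0"
proof -
  obtain b where "b \<in> Basis" "R \<le> \<bar>x \<bullet> b\<bar>"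
    using assms(2) by (auto simp: mem_cube not_le intro: less_imp_le)
  then show ?thesis
    unfolding tent_prod_def using assms(1) by (intro prod_zero bexI) (auto simp: tent_eq_0)
qed

lemma tent_prod_ge:
  assumes "R > 0" and "x \<in> cube (R / 2)"
  shows "(1 / 2) ^ DIM('a) \<le> tent_prod R (x :: 'a::euclidean_space)"
proof -
  have "1 / 2 \<le> tent R (x \<bullet> b)" if "b \<in> Basis" for b
    using assms that by (intro tent_ge_half) (auto simp: mem_cube)
  then have "(\<Prod>b\<in>(Basis::'a set). 1 / 2) \<le> (\<Prod>b\<in>Basis. tent R (x \<bullet> b))"
    by (intro prod_mono) auto
  then show ?thesis
    by (simp add: tent_prod_def)
qed

lemma continuous_on_tent_prod: "continuous_on A (tent_prod R)"
  unfolding tent_prod_def by (intro continuous_intros continuous_on_compose2[OF continuous_on_tent]) auto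

lemma fejer_prod_ge:
  assumes "R > 0" and "\<xi> \<in> cube (1 / (4 * R))"
  shows "(R / 2) ^ DIM('a) \<le> fejer_prod R (\<xi> :: 'a::euclidean_space)"
proof -
  have "R / 2 \<le> fejer R (\<xi> \<bullet> b)" if "b \<in> Basis" for b
    using assms that by (intro fejer_ge) (auto simp: mem_cube)
  then have "(\<Prod>b\<in>(Basis::'a set). R / 2) \<le> (\<Prod>b\<in>Basis. fejer R (\<xi> \<bullet> b))"
    using assms by (intro prod_mono) auto
  then show ?thesis
    by (simp add: fejer_prod_def)
qed

lemma borel_measurable_fejer_prod [measurable]: "fejer_prod R \<in> borel_measurable borel"
  unfolding fejer_prod_def by measurable

lemma integrable_fejer_prod_square:
  assumes "R > 0"
  shows "integrable lborel (\<lambda>\<xi>::'a::euclidean_space. (fejer_prod R \<xi>)\<^sup>2)"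
proof -
  have "integrable lborel (\<lambda>\<xi>::'a. \<Prod>b\<in>Basis. (\<lambda>a. (fejer R a)\<^sup>2) (\<xi> \<bullet> b))"
    using integrable_fejer_square[OF assms] by (rule integrable_prod_Basis)
  then show ?thesis
    by (simp add: fejer_prod_def prod_power_distrib)
qed

lemma fourier_tent_prod:
  fixes \<xi> :: "real ^ 'n"
  assumes R: "R > 0"
  shows "fourier (\<lambda>x. tent_prod R x) \<xi> = fejer_prod R \<xi>"
proof -
  have "cis (- 2 * pi * (x \<bullet> \<xi>)) = (\<Prod>b\<in>Basis. cis (- 2 * pi * ((x \<bullet> b) * (\<xi> \<bullet> b))))" for x :: "real ^ 'n"
    by (simp add: euclidean_inner[of x \<xi>] sum_distrib_left cis_sum)
  then have "(\<lambda>x. tent_prod R x * cis (- 2 * pi * (x \<bullet> \<xi>))) =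
      (\<lambda>x. \<Prod>b\<in>Basis. (\<lambda>t. tent R t * cis (- 2 * pi * (t * (\<xi> \<bullet> b)))) (x \<bullet> b))"
    by (simp add: tent_prod_def prod.distrib)
  then show ?thesis
    unfolding fourier_def
    using integral_prod_Basis[OF integrable_tent_fourier[OF R]] integral_tent_fourier[OF R]
    by (simp add: fejer_prod_def)
qed

section \<open>The weighted resolvent form\<close>

lemma
  fixes \<phi> q :: "'a::euclidean_space \<Rightarrow> real"
  assumes \<phi>: "integrable lborel \<phi>" and q: "q \<in> borel_measurable borel" and \<epsilon>: "\<epsilon> > 0"
  shows integrable_Im_resolvent_imag: "integrable lborel (\<lambda>\<xi>. \<phi> \<xi> * (\<epsilon> / ((q \<xi>)\<^sup>2 + \<epsilon>\<^sup>2)))"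
    and Im_integral_resolvent_imag:
      "Im (integral\<^sup>L lborel (\<lambda>\<xi>. \<phi> \<xi> / (q \<xi> - Complex 0 \<epsilon>)))
         = integral\<^sup>L lborel (\<lambda>\<xi>. \<phi> \<xi> * (\<epsilon> / ((q \<xi>)\<^sup>2 + \<epsilon>\<^sup>2)))"
proof -
  have [measurable]: "\<phi> \<in> borel_measurable lborel" "q \<in> borel_measurable lborel"
    using \<phi> q by (simp_all add: borel_measurable_integrable)
  have "cmod (\<phi> \<xi> / (q \<xi> - Complex 0 \<epsilon>)) \<le> \<bar>\<phi> \<xi>\<bar> / \<epsilon>" for \<xi>
  proof -
    have "\<epsilon> \<le> cmod (q \<xi> - Complex 0 \<epsilon>)"
      using abs_Im_le_cmod[of "q \<xi> - Complex 0 \<epsilon>"] \<epsilon> by simp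
    moreover from this have "0 < cmod (q \<xi> - Complex 0 \<epsilon>)"
      using \<epsilon> by linarith
    ultimately show ?thesis
      unfolding norm_divide norm_of_real by (rule divide_left_mono[OF _ abs_ge_zero mult_pos_pos]) (rule \<epsilon>)
  qed
  then have "AE \<xi> in lborel. norm (\<phi> \<xi> / (q \<xi> - Complex 0 \<epsilon>)) \<le> norm (\<bar>\<phi> \<xi>\<bar> / \<epsilon>)"
    using \<epsilon> by (intro AE_I2) simp
  moreover have "integrable lborel (\<lambda>\<xi>. \<bar>\<phi> \<xi>\<bar> / \<epsilon>)"
    using \<phi> by (intro integrable_divide integrable_abs)
  moreover have "(\<lambda>\<xi>. \<phi> \<xi> / (q \<xi> - Complex 0 \<epsilon>)) \<in> borel_measurable lborel"
    by measurable
  ultimately have int: "integrable lborel (\<lambda>\<xi>. \<phi> \<xi> / (q \<xi> - Complex 0 \<epsilon>))"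
    using Bochner_Integration.integrable_bound by blast
  have Im_eq: "(\<lambda>\<xi>. Im (\<phi> \<xi> / (q \<xi> - Complex 0 \<epsilon>))) = (\<lambda>\<xi>. \<phi> \<xi> * (\<epsilon> / ((q \<xi>)\<^sup>2 + \<epsilon>\<^sup>2)))"
    by (simp add: fun_eq_iff Im_divide power2_eq_square)
  show "integrable lborel (\<lambda>\<xi>. \<phi> \<xi> * (\<epsilon> / ((q \<xi>)\<^sup>2 + \<epsilon>\<^sup>2)))"
    using integrable_Im[OF int] unfolding Im_eq .
  show "Im (integral\<^sup>L lborel (\<lambda>\<xi>. \<phi> \<xi> / (q \<xi> - Complex 0 \<epsilon>)))
      = integral\<^sup>L lborel (\<lambda>\<xi>. \<phi> \<xi> * (\<epsilon> / ((q \<xi>)\<^sup>2 + \<epsilon>\<^sup>2)))"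
    using integral_Im[OF int] unfolding Im_eq by simp
qed

lemma abs_uh_symbol_le: "\<bar>uh_symbol K \<xi>\<bar> \<le> (norm \<xi>)\<^sup>2"
proof -
  have "(norm \<xi>)\<^sup>2 = (\<Sum>j\<in>UNIV. (\<xi> $ j)\<^sup>2)"
    unfolding power2_norm_eq_inner inner_vec_def by (simp add: power2_eq_square)
  also have "\<dots> = (\<Sum>j\<in>K. (\<xi> $ j)\<^sup>2) + (\<Sum>j\<in>-K. (\<xi> $ j)\<^sup>2)"
    by (subst sum.union_disjoint[symmetric]) auto
  moreover have "0 \<le> (\<Sum>j\<in>K. (\<xi> $ j)\<^sup>2)" "0 \<le> (\<Sum>j\<in>-K. (\<xi> $ j)\<^sup>2)"
    by (simp_all add: sum_nonneg)
  ultimately show ?thesis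
    unfolding uh_symbol_def by linarith
qed

lemma continuous_on_uh_symbol: "continuous_on A (uh_symbol K)"
  unfolding uh_symbol_def by (intro continuous_intros)

lemma spec_P_subset_Reals: "spec_P K \<subseteq> \<real>"
  unfolding spec_P_def by (rule closure_minimal[OF _ closed_complex_Reals]) auto

lemma japan_pos: "0 < japan x"
  by (simp add: japan_def add_pos_nonneg)

lemma continuous_on_japan: "continuous_on A japan"
  unfolding japan_def by (intro continuous_intros)

lemma wres_form_japan_weight:
  fixes g h :: "real ^ 'n \<Rightarrow> complex" and z :: complex
  shows "wres_form K s z (\<lambda>x. japan x powr s * g x) (\<lambda>x. japan x powr s * h x)
     = integral\<^sup>L lborel (\<lambda>\<xi>. fourier g \<xi> * cnj (fourier h \<xi>) / (uh_symbol K \<xi> - z))"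
proof -
  have cancel: "of_real (japan x powr - s) * (of_real (japan x powr s) * w) = w" for x and w :: complex
    using japan_pos[of x] by (simp add: mult.assoc[symmetric] powr_add[symmetric] flip: of_real_mult)
  show ?thesis
    by (simp only: wres_form_def cancel)
qed

lemma integrable_norm_power2_Cc:
  assumes "f \<in> Cc"
  shows "integrable lborel (\<lambda>x. (cmod (f x))\<^sup>2)"
proof -
  have cont: "continuous_on UNIV f" and "bounded {x. f x \<noteq> 0}"
    using assms by (simp_all add: Cc_def)
  then obtain r where r: "{x. f x \<noteq> 0} \<subseteq> ball 0 r"
    using bounded_subset_ballD by blast
  have "integrable lborel (\<lambda>x. indicator (cball 0 r) x *\<^sub>R (cmod (f x))\<^sup>2)"
    by (intro borel_integrable_compact compact_cball continuous_intros continuous_on_subset[OF cont]) auto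
  also have "(\<lambda>x. indicator (cball 0 r) x *\<^sub>R (cmod (f x))\<^sup>2) = (\<lambda>x. (cmod (f x))\<^sup>2)"
    using r by (force simp: fun_eq_iff split: split_indicator)
  finally show ?thesis .
qed

lemma l2norm_power2:
  "f \<in> Cc \<Longrightarrow> (l2norm f)\<^sup>2 = integral\<^sup>L lborel (\<lambda>x. (cmod (f x))\<^sup>2)"
  by (simp add: l2norm_def integral_nonneg_AE)

lemma wres_norm_lower_bound:
  assumes f: "f \<in> Cc" "0 < l2norm f" and U: "(l2norm f)\<^sup>2 \<le> U"
    and L: "0 \<le> L" "L \<le> cmod (wres_form K s z f f)"
  shows "ereal (L / U) \<le> wres_norm K s z"
proof -
  have sq_pos: "0 < (l2norm f)\<^sup>2"
    using f by simp
  have "L / U \<le> L / (l2norm f)\<^sup>2"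
    using L U sq_pos less_le_trans[OF sq_pos U] by (intro divide_left_mono) auto
  also have "\<dots> \<le> cmod (wres_form K s z f f) / (l2norm f)\<^sup>2"
    using L sq_pos by (intro divide_right_mono) auto
  finally have "ereal (L / U) \<le> ereal (cmod (wres_form K s z f f) / (l2norm f * l2norm f))"
    by (simp add: power2_eq_square)
  also have "\<dots> \<le> wres_norm K s z"
    unfolding wres_norm_def by (rule SUP_upper2[of "(f, f)"]) (use f in simp_all)
  finally show ?thesis .
qed

definition weighted_tent :: "real \<Rightarrow> real \<Rightarrow> real ^ 'n \<Rightarrow> complex" where
  "weighted_tent s R x = japan x powr s * tent_prod R x"

lemma weighted_tent_in_Cc:
  assumes R: "R > 0"
  shows "weighted_tent s R \<in> Cc"
proof -
  have "continuous_on UNIV (weighted_tent s R)"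
    unfolding weighted_tent_def
    by (intro continuous_intros continuous_on_of_real continuous_on_japan continuous_on_tent_prod)
       (metis japan_pos less_irrefl)
  moreover have "{x. weighted_tent s R x \<noteq> 0} \<subseteq> cube R"
    using tent_prod_eq_0[OF R] by (auto simp: weighted_tent_def)
  then have "bounded {x. weighted_tent s R x \<noteq> 0}"
    by (rule bounded_subset[rotated]) (simp add: cube_def)
  ultimately show ?thesis
    by (simp add: Cc_def)
qed

lemma norm_weighted_tent_power2:
  "(cmod (weighted_tent s R x))\<^sup>2 = (1 + (norm x)\<^sup>2) powr s * (tent_prod R x)\<^sup>2"
proof -
  have "(japan x powr s)\<^sup>2 = (1 + (norm x)\<^sup>2) powr s"
    using japan_pos[of x]
    by (simp add: japan_def powr_half_sqrt[symmetric] add_nonneg_nonneg powr_powr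
        flip: powr_add powr_numeral)
  then show ?thesis
    by (simp add: weighted_tent_def norm_mult power_mult_distrib tent_prod_nonneg)
qed

lemma l2norm_weighted_tent_power2_le:
  assumes R: "R \<ge> 1" and s: "s \<ge> 0"
  shows "(l2norm (weighted_tent s R :: real ^ 'n::finite \<Rightarrow> complex))\<^sup>2
           \<le> (1 + real CARD('n)) powr s * R powr (2 * s) * (2 * R) ^ CARD('n)"
proof -
  define W where "W = (1 + real CARD('n)) powr s * R powr (2 * s)"
  have bound: "(cmod (weighted_tent s R x))\<^sup>2 \<le> W * indicator (cube R) x" for x :: "real ^ 'n"
  proof (cases "x \<in> cube R")
    case True
    have "1 + (norm x)\<^sup>2 \<le> R\<^sup>2 + CARD('n) * R\<^sup>2"
      using norm_power2_le_of_mem_cube[OF True] one_le_power[OF R, of 2] by simp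
    then have "1 + (norm x)\<^sup>2 \<le> (1 + real CARD('n)) * R\<^sup>2"
      by (simp add: algebra_simps)
    then have "(1 + (norm x)\<^sup>2) powr s \<le> ((1 + real CARD('n)) * R\<^sup>2) powr s"
      using s by (intro powr_mono2) auto
    also have "\<dots> = W"
      using R by (simp add: W_def powr_mult powr_powr flip: powr_numeral)
    moreover have "(tent_prod R x)\<^sup>2 \<le> 1"
      using R by (intro power_le_one tent_prod_nonneg tent_prod_le_1) auto
    ultimately have "(1 + (norm x)\<^sup>2) powr s * (tent_prod R x)\<^sup>2 \<le> W * 1"
      by (intro mult_mono) (auto simp: W_def)
    then show ?thesis
      using True by (simp add: norm_weighted_tent_power2)
  qed (use R in \<open>simp add: norm_weighted_tent_power2 tent_prod_eq_0\<close>)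
  have "integral\<^sup>L lborel (\<lambda>x::real ^ 'n. (cmod (weighted_tent s R x))\<^sup>2)
          \<le> integral\<^sup>L lborel (\<lambda>x::real ^ 'n. W * indicator (cube R) x)"
    using R bound
    by (intro integral_mono integrable_mult_right integrable_real_indicator integrable_norm_power2_Cc
        weighted_tent_in_Cc) (auto simp: cube_def)
  also have "\<dots> = W * (2 * R) ^ CARD('n)"
    using R by (simp add: measure_cube cube_def[symmetric])
  finally show ?thesis
    using R by (simp add: l2norm_power2 weighted_tent_in_Cc W_def)
qed

lemma l2norm_weighted_tent_pos:
  assumes R: "R > 0" and s: "s \<ge> 0"
  shows "0 < l2norm (weighted_tent s R :: real ^ 'n::finite \<Rightarrow> complex)"
proof -
  have bound: "(1 / 4) ^ CARD('n) * indicator (cube (R / 2)) x \<le> (cmod (weighted_tent s R x))\<^sup>2"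
    for x :: "real ^ 'n"
  proof (cases "x \<in> cube (R / 2)")
    case True
    have "((1 / 2) ^ CARD('n))\<^sup>2 \<le> (tent_prod R x)\<^sup>2"
      using tent_prod_ge[OF R True] by (intro power_mono) auto
    moreover have "1 \<le> (1 + (norm x)\<^sup>2) powr s"
      using s by (intro ge_one_powr_ge_zero) auto
    ultimately have "1 * ((1 / 2) ^ CARD('n))\<^sup>2 \<le> (1 + (norm x)\<^sup>2) powr s * (tent_prod R x)\<^sup>2"
      by (intro mult_mono) auto
    moreover have "((1 / 2) ^ CARD('n))\<^sup>2 = (1 / 4 :: real) ^ CARD('n)"
      by (simp add: power2_eq_square flip: power_mult_distrib)
    ultimately show ?thesis
      using True by (simp add: norm_weighted_tent_power2)
  qed simp
  have "0 < (1 / 4) ^ CARD('n) * R ^ CARD('n)"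
    using R by simp
  also have "\<dots> = integral\<^sup>L lborel (\<lambda>x. (1 / 4) ^ CARD('n) * indicator (cube (R / 2) :: (real ^ 'n) set) x)"
    using R by (simp add: measure_cube)
  also have "\<dots> \<le> integral\<^sup>L lborel (\<lambda>x::real ^ 'n. (cmod (weighted_tent s R x))\<^sup>2)"
    using R bound
    by (intro integral_mono integrable_mult_right integrable_real_indicator integrable_norm_power2_Cc
        weighted_tent_in_Cc) (auto simp: cube_def)
  finally show ?thesis
    by (simp add: l2norm_def)
qed

lemma fejer_prod_resolvent_ge:
  fixes \<xi> :: "real ^ 'n"
  assumes R: "R > 0" and \<xi>: "\<xi> \<in> cube (1 / (4 * R))"
  shows "(R / 2) ^ (2 * CARD('n)) * (R\<^sup>2 / (1 + (real CARD('n))\<^sup>2))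
           \<le> (fejer_prod R \<xi>)\<^sup>2 * ((1 / R\<^sup>2) / ((uh_symbol K \<xi>)\<^sup>2 + (1 / R\<^sup>2)\<^sup>2))"
proof -
  define D where "D = real CARD('n)"
  have "(R / 2) ^ CARD('n) \<le> fejer_prod R \<xi>"
    using fejer_prod_ge[OF R \<xi>] by simp
  then have fejer: "(R / 2) ^ (2 * CARD('n)) \<le> (fejer_prod R \<xi>)\<^sup>2"
    using R by (simp add: power_mult power_mono mult.commute[of 2])
  have "\<bar>uh_symbol K \<xi>\<bar> \<le> D * (1 / (4 * R))\<^sup>2"
    using abs_uh_symbol_le[of K \<xi>] norm_power2_le_of_mem_cube[OF \<xi>] by (simp add: D_def)
  also have "\<dots> \<le> D / R\<^sup>2"
    using R by (simp add: D_def power_divide field_simps)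
  finally have "(uh_symbol K \<xi>)\<^sup>2 \<le> (D / R\<^sup>2)\<^sup>2"
    by (simp add: abs_le_square_iff[symmetric] D_def)
  then have "(uh_symbol K \<xi>)\<^sup>2 + (1 / R\<^sup>2)\<^sup>2 \<le> (1 + D\<^sup>2) / R\<^sup>2 / R\<^sup>2"
    by (simp add: power_divide add_divide_distrib)
  then have "R\<^sup>2 / (1 + D\<^sup>2) \<le> (1 / R\<^sup>2) / ((uh_symbol K \<xi>)\<^sup>2 + (1 / R\<^sup>2)\<^sup>2)"
    using R by (simp add: field_simps add_pos_nonneg)
  with fejer show ?thesis
    unfolding D_def using R by (intro mult_mono) (auto simp: add_pos_nonneg)
qed

lemma integral_fejer_prod_resolvent_ge:
  fixes K :: "'n::finite set"
  assumes R: "R > 0"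
  shows "R ^ (CARD('n) + 2) / (8 ^ CARD('n) * (1 + (real CARD('n))\<^sup>2))
           \<le> integral\<^sup>L lborel (\<lambda>\<xi>::real ^ 'n.
                 (fejer_prod R \<xi>)\<^sup>2 * ((1 / R\<^sup>2) / ((uh_symbol K \<xi>)\<^sup>2 + (1 / R\<^sup>2)\<^sup>2)))"
proof -
  define D where "D = CARD('n)"
  define \<delta> where "\<delta> = 1 / (4 * R)"
  define c where "c = (R / 2) ^ (2 * D) * (R\<^sup>2 / (1 + (real D)\<^sup>2))"
  have "(R / 2) ^ (2 * D) * (2 * \<delta>) ^ D = ((R / 2)\<^sup>2 * (2 * \<delta>)) ^ D"
    by (simp add: power_mult power_mult_distrib)
  also have "(R / 2)\<^sup>2 * (2 * \<delta>) = R / 8"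
    using R by (simp add: \<delta>_def power2_eq_square)
  finally have cube_factor: "(R / 2) ^ (2 * D) * (2 * \<delta>) ^ D = R ^ D / 8 ^ D"
    by (simp add: power_divide)
  have "R ^ (D + 2) / (8 ^ D * (1 + (real D)\<^sup>2)) = (R / 2) ^ (2 * D) * (2 * \<delta>) ^ D * (R\<^sup>2 / (1 + (real D)\<^sup>2))"
    unfolding cube_factor by (simp add: power_add power2_eq_square algebra_simps)
  also have "\<dots> = c * measure lborel (cube \<delta> :: (real ^ 'n) set)"
    using R by (simp add: measure_cube \<delta>_def c_def D_def)
  also have "\<dots> = integral\<^sup>L lborel (\<lambda>\<xi>::real ^ 'n. c * indicator (cube \<delta>) \<xi>)"
    by (simp add: cube_def)
  also have "\<dots> \<le> integral\<^sup>L lborel (\<lambda>\<xi>::real ^ 'n.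
                 (fejer_prod R \<xi>)\<^sup>2 * ((1 / R\<^sup>2) / ((uh_symbol K \<xi>)\<^sup>2 + (1 / R\<^sup>2)\<^sup>2)))"
  proof (rule integral_mono)
    show "integrable lborel (\<lambda>\<xi>::real ^ 'n. c * indicator (cube \<delta>) \<xi>)"
      by (intro integrable_mult_right integrable_real_indicator)
         (simp_all add: cube_def emeasure_lborel_cbox_finite[simplified])
    show "integrable lborel (\<lambda>\<xi>::real ^ 'n.
        (fejer_prod R \<xi>)\<^sup>2 * ((1 / R\<^sup>2) / ((uh_symbol K \<xi>)\<^sup>2 + (1 / R\<^sup>2)\<^sup>2)))"
      using R by (intro integrable_Im_resolvent_imag integrable_fejer_prod_square
          borel_measurable_continuous_onI continuous_on_uh_symbol) auto
    show "c * indicator (cube \<delta>) \<xi> \<le> (fejer_prod R \<xi>)\<^sup>2 * ((1 / R\<^sup>2) / ((uh_symbol K \<xi>)\<^sup>2 + (1 / R\<^sup>2)\<^sup>2))"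
      for \<xi> :: "real ^ 'n"
      using fejer_prod_resolvent_ge[OF R, of \<xi> K]
      by (auto simp: c_def D_def \<delta>_def split: split_indicator intro!: mult_nonneg_nonneg)
  qed
  finally show ?thesis
    by (simp add: D_def)
qed

lemma cmod_wres_form_weighted_tent_ge:
  fixes K :: "'n::finite set"
  assumes R: "R > 0"
  shows "R ^ (CARD('n) + 2) / (8 ^ CARD('n) * (1 + (real CARD('n))\<^sup>2))
           \<le> cmod (wres_form K s (Complex 0 (1 / R\<^sup>2)) (weighted_tent s R) (weighted_tent s R))"
proof -
  define \<epsilon> where "\<epsilon> = 1 / R\<^sup>2"
  have weighted_tent_eq: "weighted_tent s R = (\<lambda>x. japan x powr s * complex_of_real (tent_prod R x))"
    by (simp add: fun_eq_iff weighted_tent_def)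
  have "wres_form K s (Complex 0 \<epsilon>) (weighted_tent s R) (weighted_tent s R)
      = integral\<^sup>L lborel (\<lambda>\<xi>. (fejer_prod R \<xi>)\<^sup>2 / (uh_symbol K \<xi> - Complex 0 \<epsilon>))"
    unfolding weighted_tent_eq wres_form_japan_weight fourier_tent_prod[OF R]
    by (simp add: power2_eq_square)
  moreover have "Im (integral\<^sup>L lborel (\<lambda>\<xi>. (fejer_prod R \<xi>)\<^sup>2 / (uh_symbol K \<xi> - Complex 0 \<epsilon>)))
      = integral\<^sup>L lborel (\<lambda>\<xi>. (fejer_prod R \<xi>)\<^sup>2 * (\<epsilon> / ((uh_symbol K \<xi>)\<^sup>2 + \<epsilon>\<^sup>2)))"
    using R by (intro Im_integral_resolvent_imag integrable_fejer_prod_square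
        borel_measurable_continuous_onI continuous_on_uh_symbol) (auto simp: \<epsilon>_def)
  ultimately have "Im (wres_form K s (Complex 0 \<epsilon>) (weighted_tent s R) (weighted_tent s R))
      = integral\<^sup>L lborel (\<lambda>\<xi>. (fejer_prod R \<xi>)\<^sup>2 * (\<epsilon> / ((uh_symbol K \<xi>)\<^sup>2 + \<epsilon>\<^sup>2)))"
    by simp
  then show ?thesis
    using integral_fejer_prod_resolvent_ge[OF R, of K]
      abs_Im_le_cmod[of "wres_form K s (Complex 0 \<epsilon>) (weighted_tent s R) (weighted_tent s R)"]
    by (simp add: \<epsilon>_def)
qed

lemma wres_norm_weighted_tent_ge:
  fixes K :: "'n::finite set"
  assumes R: "R \<ge> 1" and s: "s \<ge> 0"
  shows "ereal (R powr (2 - 2 * s) / (16 ^ CARD('n) * (1 + real CARD('n)) powr s * (1 + (real CARD('n))\<^sup>2)))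
           \<le> wres_norm K s (Complex 0 (1 / R\<^sup>2))"
proof -
  define D where "D = CARD('n)"
  define f :: "real ^ 'n \<Rightarrow> complex" where "f = weighted_tent s R"
  define L where "L = R ^ (D + 2) / (8 ^ D * (1 + (real D)\<^sup>2))"
  define U where "U = (1 + real D) powr s * R powr (2 * s) * (2 * R) ^ D"
  have lower: "ereal (L / U) \<le> wres_norm K s (Complex 0 (1 / R\<^sup>2))"
  proof (rule wres_norm_lower_bound)
    show "f \<in> Cc" "0 < l2norm f"
      unfolding f_def using R s by (auto intro: weighted_tent_in_Cc l2norm_weighted_tent_pos)
    show "(l2norm f)\<^sup>2 \<le> U"
      unfolding f_def U_def D_def using R s by (rule l2norm_weighted_tent_power2_le)
    show "0 \<le> L" "L \<le> cmod (wres_form K s (Complex 0 (1 / R\<^sup>2)) f f)"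
      using cmod_wres_form_weighted_tent_ge[of R K s] R by (simp_all add: f_def L_def D_def)
  qed
  have pos: "0 < R ^ D" "0 < R powr (2 * s)" "0 < (1 + real D) powr s" "0 < 1 + (real D)\<^sup>2"
    using R by (simp_all add: add_pos_nonneg)
  have "L = R ^ D * (R\<^sup>2 / (8 ^ D * (1 + (real D)\<^sup>2)))"
    by (simp add: L_def power_add power2_eq_square)
  moreover have "U = R ^ D * ((1 + real D) powr s * R powr (2 * s) * 2 ^ D)"
    by (simp add: U_def power_mult_distrib)
  ultimately have "L / U = (R\<^sup>2 / (8 ^ D * (1 + (real D)\<^sup>2))) / ((1 + real D) powr s * R powr (2 * s) * 2 ^ D)"
    using pos by simp
  also have "\<dots> = R\<^sup>2 / R powr (2 * s) / (8 ^ D * 2 ^ D * (1 + real D) powr s * (1 + (real D)\<^sup>2))"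
    using pos by (simp add: field_simps)
  also have "\<dots> = R powr (2 - 2 * s) / (16 ^ D * (1 + real D) powr s * (1 + (real D)\<^sup>2))"
    using R by (simp add: powr_diff powr_numeral flip: power_mult_distrib)
  finally show ?thesis
    using lower by (simp add: D_def)
qed

lemma ex_ge_1_powr_ge:
  fixes y p :: real
  assumes "p > 0"
  obtains R where "R \<ge> 1" and "y \<le> R powr p"
proof
  define R where "R = max 1 (\<bar>y\<bar> powr (1 / p))"
  show "R \<ge> 1"
    by (simp add: R_def)
  have "y \<le> (\<bar>y\<bar> powr (1 / p)) powr p"
    using assms by (simp add: powr_powr)
  also have "\<dots> \<le> R powr p"
    using assms by (intro powr_mono2) (auto simp: R_def)
  finally show "y \<le> R powr p" .
qed

theorem proposition2p11:
  fixes K :: "'n::finite set" and s :: real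
  assumes "CARD('n) \<ge> 3" and "0 \<le> s" and "s < 1"
  shows "(SUP z \<in> - spec_P K. wres_norm K s z) = \<infinity>"
proof (rule SUP_PInfty)
  fix n :: nat
  define C where "C = 16 ^ CARD('n) * (1 + real CARD('n)) powr s * (1 + (real CARD('n))\<^sup>2)"
  have "C > 0"
    by (simp add: C_def add_pos_nonneg)
  obtain R where R: "R \<ge> 1" and "n * C \<le> R powr (2 - 2 * s)"
    by (rule ex_ge_1_powr_ge[of "2 - 2 * s"]) (use \<open>s < 1\<close> in simp_all)
  then have "ereal n \<le> ereal (R powr (2 - 2 * s) / C)"
    using \<open>C > 0\<close> by (simp add: pos_le_divide_eq)
  also have "\<dots> \<le> wres_norm K s (Complex 0 (1 / R\<^sup>2))"
    unfolding C_def by (rule wres_norm_weighted_tent_ge[OF R \<open>0 \<le> s\<close>])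
  finally have "ereal n \<le> wres_norm K s (Complex 0 (1 / R\<^sup>2))" .
  moreover have "Complex 0 (1 / R\<^sup>2) \<notin> spec_P K"
    using spec_P_subset_Reals R by (force simp: complex_is_Real_iff)
  ultimately show "\<exists>z\<in>- spec_P K. ereal (real n) \<le> wres_norm K s z"
    by blast
qed

end
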